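(* Let $G$ be a profinite group and suppose an element $g\in G$ has a countable Engel sink. Then there are positive integers $i,k$ and a coset $Nb$ of an open normal subgroup $N$ of $G$ such that $[[nb,{}_i g],g^k]=1$ for all $n\in N$.
   Context: Commutators are left-normed, $[a,b]=a^{-1}b^{-1}ab$, and $[x,{}_n g]=[x,g,\dots,g]$ with $g$ repeated $n$ times. An Engel sink of an element $g$ of a group $G$ is a set $\mathscr E(g)\subseteq G$ such that for every $x\in G$ there is a positive integer $n(x,g)$ with $[x,{}_n g]\in\mathscr E(g)$ for all $n\ge n(x,g)$. "Countable" means finite or denumerable. *)

theory Defs
  imports "HOL-Analysis.Analysis" "HOL-Algebra.Coset"
begin

definition topological_group :: "('a, 'b) monoid_scheme \<Rightarrow> 'a topology \<Rightarrow> bool" where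
  "topological_group G T \<longleftrightarrow> group G \<and> topspace T = carrier G \<and>
     continuous_map (prod_topology T T) T (\<lambda>(x, y). x \<otimes>\<^bsub>G\<^esub> y) \<and>
     continuous_map T T (\<lambda>x. inv\<^bsub>G\<^esub> x)"

definition totally_disconnected_space :: "'a topology \<Rightarrow> bool" where
  "totally_disconnected_space T \<longleftrightarrow> (\<forall>S. connectedin T S \<longrightarrow> (\<exists>a. S \<subseteq> {a}))"

definition profinite_group :: "('a, 'b) monoid_scheme \<Rightarrow> 'a topology \<Rightarrow> bool" where
  "profinite_group G T \<longleftrightarrow> topological_group G T \<and> compact_space T \<and>
     Hausdorff_space T \<and> totally_disconnected_space T"

definition gcomm :: "('a, 'b) monoid_scheme \<Rightarrow> 'a \<Rightarrow> 'a \<Rightarrow> 'a" where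
  "gcomm G a b = inv\<^bsub>G\<^esub> a \<otimes>\<^bsub>G\<^esub> inv\<^bsub>G\<^esub> b \<otimes>\<^bsub>G\<^esub> a \<otimes>\<^bsub>G\<^esub> b"

fun engel_comm :: "('a, 'b) monoid_scheme \<Rightarrow> 'a \<Rightarrow> nat \<Rightarrow> 'a \<Rightarrow> 'a" where
  "engel_comm G x 0 g = x"
| "engel_comm G x (Suc n) g = gcomm G (engel_comm G x n g) g"

definition engel_sink :: "('a, 'b) monoid_scheme \<Rightarrow> 'a \<Rightarrow> 'a set \<Rightarrow> bool" where
  "engel_sink G g E \<longleftrightarrow> E \<subseteq> carrier G \<and>
     (\<forall>x\<in>carrier G. \<exists>n0>0. \<forall>n\<ge>n0. engel_comm G x n g \<in> E)"

end

theory Submission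
  imports Defs
begin

text \<open>
  If \<open>g\<close> has a countable Engel sink \<open>E\<close>, the closed sets \<open>{x. [x,\<^sub>i g] = e}\<close>
  (\<open>i > 0\<close>, \<open>e \<in> E\<close>) cover the compact group \<open>G\<close>, so by Baire's theorem one of
  them has nonempty interior and therefore contains a coset \<open>N b\<close> of an open normal subgroup
  \<open>N\<close>; the open normal subgroups form a neighbourhood base of \<open>1\<close> because \<open>G\<close> is profinite.
  As \<open>N\<close> has finite index, some power \<open>c = g\<^sup>k\<close> with \<open>k > 0\<close> lies in \<open>N\<close>.
  Conjugation by \<open>c\<close> preserves the coset \<open>N b\<close> and fixes \<open>g\<close>, hence it fixes the
  constant value \<open>e\<close> of \<open>[x,\<^sub>i g]\<close> on \<open>N b\<close>, that is \<open>[e, g\<^sup>k] = 1\<close>.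
\<close>

lemma openin_Ball_compact_space:
  assumes "compact_space X"
    and "closedin (prod_topology X Y) {z \<in> topspace (prod_topology X Y). \<not> P (fst z) (snd z)}"
  shows "openin Y {y \<in> topspace Y. \<forall>x\<in>topspace X. P x y}"
proof -
  let ?C = "{z \<in> topspace (prod_topology X Y). \<not> P (fst z) (snd z)}"
  have "closedin Y (snd ` ?C)"
    using closed_map_snd[OF assms(1)] assms(2) unfolding closed_map_def by blast
  moreover have "{y \<in> topspace Y. \<forall>x\<in>topspace X. P x y} = topspace Y - snd ` ?C"
    by force
  ultimately show ?thesis
    by auto
qed

lemma closedin_clopen_membership_differs:
  assumes "continuous_map Z X f" "continuous_map Z X h" "openin X U" "closedin X U"
  shows "closedin Z {z \<in> topspace Z. (f z \<in> U) \<noteq> (h z \<in> U)}"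
proof -
  have compl: "closedin X (topspace X - U)"
    using assms(3) by blast
  have "closedin Z ({z \<in> topspace Z. f z \<in> U} \<inter> {z \<in> topspace Z. h z \<in> topspace X - U} \<union>
      {z \<in> topspace Z. f z \<in> topspace X - U} \<inter> {z \<in> topspace Z. h z \<in> U})"
    by (intro closedin_Un closedin_Int closedin_continuous_map_preimage[OF assms(1)]
        closedin_continuous_map_preimage[OF assms(2)] compl assms(4))
  moreover have "\<dots> = {z \<in> topspace Z. (f z \<in> U) \<noteq> (h z \<in> U)}"
    using assms(1,2) by (auto simp: continuous_map_def)
  ultimately show ?thesis
    by simp
qed

lemma clopen_nbhd_in_totally_disconnected_space:
  assumes "locally_compact_space X" "Hausdorff_space X" "totally_disconnected_space X"
    and "openin X W" "a \<in> W"
  obtains U where "openin X U" "closedin X U" "a \<in> U" "U \<subseteq> W"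
proof -
  have a: "a \<in> topspace X"
    using assms(4,5) openin_subset by blast
  obtain c where "connected_component_of_set X a \<subseteq> {c}"
    using assms(3) connectedin_connected_component_of[of X a]
    unfolding totally_disconnected_space_def by blast
  moreover have "a \<in> connected_component_of_set X a"
    using a by (simp add: connected_component_of_refl)
  ultimately have "connected_component_of_set X a = {a}"
    by blast
  then have "{a} \<in> connected_components_of X"
    using connected_component_in_connected_components_of[of X a] a by simp
  moreover have "compactin X {a}"
    using a by simp
  ultimately obtain U V where "openin X U" "openin X V" "disjnt U V" "U \<union> V = topspace X"
      "{a} \<subseteq> U" "U \<subseteq> W"
    using wilder_locally_compact_component_thm[OF assms(1,2)] assms(4,5) by blast
  moreover have "closedin X U"
  proof -
    have "U = topspace X - V"
      using \<open>disjnt U V\<close> \<open>U \<union> V = topspace X\<close> by (auto simp: disjnt_iff)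
    then show ?thesis
      using \<open>openin X V\<close> by blast
  qed
  ultimately show ?thesis
    using that by blast
qed

lemma Baire_compact_space_countable_closed_cover:
  assumes "compact_space X" "Hausdorff_space X" "topspace X \<noteq> {}"
    and "countable \<G>" "\<And>S. S \<in> \<G> \<Longrightarrow> closedin X S" "\<Union>\<G> = topspace X"
  obtains S where "S \<in> \<G>" "X interior_of S \<noteq> {}"
proof -
  have lc: "locally_compact_space X"
    using assms(1) by (rule compact_imp_locally_compact_space)
  then have "regular_space X"
    using assms(2) by (rule locally_compact_Hausdorff_imp_regular_space)
  show ?thesis
  proof (rule ccontr)
    assume "\<not> thesis"
    then have "X interior_of \<Union>\<G> = {}"
      using Baire_category_alt[of X \<G>] lc \<open>regular_space X\<close> assms(4,5) that by blast
    with assms(3,6) show False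
      by simp
  qed
qed

definition two_sided_stabilizer :: "('a, 'b) monoid_scheme \<Rightarrow> 'a set \<Rightarrow> 'a set" where
  "two_sided_stabilizer G U = {h \<in> carrier G. \<forall>x\<in>carrier G. \<forall>y\<in>carrier G.
     x \<otimes>\<^bsub>G\<^esub> h \<otimes>\<^bsub>G\<^esub> y \<in> U \<longleftrightarrow> x \<otimes>\<^bsub>G\<^esub> y \<in> U}"

lemma (in group) two_sided_stabilizer_normal: "two_sided_stabilizer G U \<lhd> G"
proof -
  let ?N = "two_sided_stabilizer G U"
  have stab: "x \<otimes> h \<otimes> y \<in> U \<longleftrightarrow> x \<otimes> y \<in> U"
    if "h \<in> ?N" "x \<in> carrier G" "y \<in> carrier G" for h x y
    using that unfolding two_sided_stabilizer_def by blast
  have carr: "?N \<subseteq> carrier G"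
    unfolding two_sided_stabilizer_def by blast
  have "subgroup ?N G"
  proof (rule subgroupI[OF carr])
    show "?N \<noteq> {}"
      by (auto simp: two_sided_stabilizer_def)
  next
    fix a assume a: "a \<in> ?N"
    with carr have "a \<in> carrier G" by blast
    moreover have "x \<otimes> inv a \<otimes> y \<in> U \<longleftrightarrow> x \<otimes> y \<in> U"
      if "x \<in> carrier G" "y \<in> carrier G" for x y
      using stab[OF a, of "x \<otimes> inv a" y] that \<open>a \<in> carrier G\<close> by (simp add: m_assoc)
    ultimately show "inv a \<in> ?N"
      unfolding two_sided_stabilizer_def by simp
  next
    fix a b assume a: "a \<in> ?N" and b: "b \<in> ?N"
    with carr have "a \<in> carrier G" "b \<in> carrier G" by blast+
    moreover have "x \<otimes> (a \<otimes> b) \<otimes> y \<in> U \<longleftrightarrow> x \<otimes> y \<in> U"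
      if "x \<in> carrier G" "y \<in> carrier G" for x y
      using stab[OF a, of x "b \<otimes> y"] stab[OF b, of x y] that \<open>a \<in> carrier G\<close> \<open>b \<in> carrier G\<close>
      by (simp add: m_assoc)
    ultimately show "a \<otimes> b \<in> ?N"
      unfolding two_sided_stabilizer_def by simp
  qed
  moreover have "z \<otimes> h \<otimes> inv z \<in> ?N" if "z \<in> carrier G" "h \<in> ?N" for z h
  proof -
    have "h \<in> carrier G" using that carr by blast
    moreover have "x \<otimes> (z \<otimes> h \<otimes> inv z) \<otimes> y \<in> U \<longleftrightarrow> x \<otimes> y \<in> U"
      if "x \<in> carrier G" "y \<in> carrier G" for x y
    proof -
      have "z \<otimes> (inv z \<otimes> y) = y"
        using that \<open>z \<in> carrier G\<close> by (simp flip: m_assoc)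
      then show ?thesis
        using stab[OF \<open>h \<in> ?N\<close>, of "x \<otimes> z" "inv z \<otimes> y"] that \<open>z \<in> carrier G\<close> \<open>h \<in> carrier G\<close>
        by (simp add: m_assoc)
    qed
    ultimately show ?thesis
      using \<open>z \<in> carrier G\<close> unfolding two_sided_stabilizer_def by simp
  qed
  ultimately show ?thesis
    by (simp add: normal_inv_iff)
qed

lemma (in group) two_sided_stabilizer_subset:
  assumes "\<one> \<in> U"
  shows "two_sided_stabilizer G U \<subseteq> U"
proof
  fix h assume "h \<in> two_sided_stabilizer G U"
  then have "h \<in> carrier G" "\<one> \<otimes> h \<otimes> \<one> \<in> U \<longleftrightarrow> \<one> \<otimes> \<one> \<in> U"
    unfolding two_sided_stabilizer_def by blast+
  with assms show "h \<in> U"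
    by simp
qed

lemma (in group) nat_pow_in_subgroup_of_finite_index:
  assumes "subgroup H G" "finite (rcosets H)" "g \<in> carrier G"
  obtains k :: nat where "k > 0" "g [^] k \<in> H"
proof -
  have "range (\<lambda>k::nat. H #> g [^] k) \<subseteq> rcosets H"
    using assms(3) unfolding RCOSETS_def by auto
  then have "finite (range (\<lambda>k::nat. H #> g [^] k))"
    using assms(2) finite_subset by blast
  then have "\<not> inj (\<lambda>k::nat. H #> g [^] k)"
    using finite_imageD infinite_UNIV_nat by blast
  then obtain a c :: nat where "a \<noteq> c" "H #> g [^] a = H #> g [^] c"
    unfolding inj_def by blast
  then obtain a c :: nat where "a < c" and eq: "H #> g [^] a = H #> g [^] c"
    by (metis linorder_neqE_nat)
  have "g [^] c \<in> H #> g [^] a"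
    using repr_independenceD[OF assms(1) nat_pow_closed[OF assms(3)] eq] .
  then have "g [^] c \<otimes> inv (g [^] a) \<in> H"
    by (rule subgroup.rcos_module_imp[OF assms(1) is_group nat_pow_closed[OF assms(3)]])
  moreover have "g [^] c \<otimes> inv (g [^] a) = g [^] (c - a) \<otimes> g [^] a \<otimes> inv (g [^] a)"
    using \<open>a < c\<close> assms(3) by (simp add: nat_pow_mult)
  moreover have "\<dots> = g [^] (c - a)"
    using assms(3) by (simp add: m_assoc)
  ultimately have "g [^] (c - a) \<in> H"
    by simp
  then show ?thesis
    using that[of "c - a"] \<open>a < c\<close> by simp
qed

lemma (in group) engel_comm_closed:
  assumes "g \<in> carrier G" "x \<in> carrier G"
  shows "engel_comm G x i g \<in> carrier G"
  by (induction i) (simp_all add: gcomm_def assms)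

lemma (in group) gcomm_conj_commuting:
  assumes "g \<in> carrier G" "a \<in> carrier G" "c \<in> carrier G" "c \<otimes> g = g \<otimes> c"
  shows "gcomm G (inv c \<otimes> a \<otimes> c) g = inv c \<otimes> gcomm G a g \<otimes> c"
proof -
  have "inv g \<otimes> inv c = inv c \<otimes> inv g"
    using assms by (metis inv_mult_group)
  then have inv_g: "c \<otimes> inv g \<otimes> inv c = inv g"
    using assms by (simp add: m_assoc flip: m_assoc[of c "inv c"])
  have "gcomm G (inv c \<otimes> a \<otimes> c) g = inv c \<otimes> inv a \<otimes> (c \<otimes> inv g \<otimes> inv c) \<otimes> a \<otimes> (c \<otimes> g)"
    using assms(1-3) by (simp add: gcomm_def inv_mult_group m_assoc)
  also have "\<dots> = inv c \<otimes> gcomm G a g \<otimes> c"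
    using assms by (simp add: inv_g gcomm_def m_assoc)
  finally show ?thesis .
qed

lemma (in group) engel_comm_conj_commuting:
  assumes "g \<in> carrier G" "a \<in> carrier G" "c \<in> carrier G" "c \<otimes> g = g \<otimes> c"
  shows "engel_comm G (inv c \<otimes> a \<otimes> c) i g = inv c \<otimes> engel_comm G a i g \<otimes> c"
  by (induction i) (simp_all add: assms gcomm_conj_commuting engel_comm_closed)

lemma (in group) gcomm_eq_one_if_engel_comm_constant_on_coset:
  assumes "N \<lhd> G" "b \<in> carrier G" "g \<in> carrier G" "c \<in> N" "c \<otimes> g = g \<otimes> c"
    and const: "\<And>n. n \<in> N \<Longrightarrow> engel_comm G (n \<otimes> b) i g = e" and "n \<in> N"
  shows "gcomm G (engel_comm G (n \<otimes> b) i g) c = \<one>"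
proof -
  interpret normal N G by fact
  have c: "c \<in> carrier G" and n: "n \<in> carrier G"
    using assms(4,7) by simp_all
  have "engel_comm G (n \<otimes> b) i g \<in> carrier G"
    using engel_comm_closed[OF assms(3)] n assms(2) by simp
  then have e: "e \<in> carrier G"
    using const[OF assms(7)] by simp
  \<comment> \<open>Conjugation by \<open>c\<close> maps the coset \<open>N b\<close> to itself and fixes \<open>g\<close>,
    hence fixes the constant value \<open>e\<close>.\<close>
  have "inv c \<otimes> (n \<otimes> b) \<otimes> c = (inv c \<otimes> n \<otimes> (b \<otimes> c \<otimes> inv b)) \<otimes> b"
    using c n assms(2) by (simp add: m_assoc)
  moreover have "inv c \<otimes> n \<otimes> (b \<otimes> c \<otimes> inv b) \<in> N"
    using assms(2,4,7) by (intro m_closed m_inv_closed inv_op_closed2)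
  ultimately have "engel_comm G (inv c \<otimes> (n \<otimes> b) \<otimes> c) i g = e"
    using const by simp
  then have "inv c \<otimes> e \<otimes> c = e"
    using engel_comm_conj_commuting[OF assms(3) _ c assms(5)] const[OF assms(7)] n assms(2) by simp
  then show ?thesis
    using const[OF assms(7)] c e by (simp add: gcomm_def m_assoc)
qed

lemma group_of_topological_group: "topological_group G T \<Longrightarrow> group G"
  unfolding topological_group_def by blast

lemma topspace_topological_group: "topological_group G T \<Longrightarrow> topspace T = carrier G"
  unfolding topological_group_def by blast

lemma continuous_map_group_mult:
  assumes "topological_group G T" "continuous_map X T f" "continuous_map X T h"
  shows "continuous_map X T (\<lambda>x. f x \<otimes>\<^bsub>G\<^esub> h x)"
proof -
  have "continuous_map X T ((\<lambda>(x, y). x \<otimes>\<^bsub>G\<^esub> y) \<circ> (\<lambda>x. (f x, h x)))"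
    using assms unfolding topological_group_def
    by (intro continuous_map_compose[OF continuous_map_pairedI]) auto
  then show ?thesis
    by (simp add: o_def)
qed

lemma continuous_map_group_inv:
  assumes "topological_group G T" "continuous_map X T f"
  shows "continuous_map X T (\<lambda>x. inv\<^bsub>G\<^esub> f x)"
proof -
  have "continuous_map X T ((\<lambda>x. inv\<^bsub>G\<^esub> x) \<circ> f)"
    using assms unfolding topological_group_def by (meson continuous_map_compose)
  then show ?thesis
    by (simp add: o_def)
qed

lemma continuous_map_group_const:
  assumes "topological_group G T" "c \<in> carrier G"
  shows "continuous_map X T (\<lambda>x. c)"
  using assms by (simp add: topspace_topological_group)

lemma continuous_map_engel_comm:
  assumes "topological_group G T" "g \<in> carrier G"
  shows "continuous_map T T (\<lambda>x. engel_comm G x i g)"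
proof (induction i)
  case 0
  then show ?case by simp
next
  case (Suc i)
  then show ?case
    unfolding engel_comm.simps gcomm_def
    by (intro continuous_map_group_mult[OF assms(1)] continuous_map_group_inv[OF assms(1)]
        continuous_map_group_const[OF assms])
qed

lemma openin_two_sided_stabilizer:
  assumes "topological_group G T" "compact_space T" "openin T U" "closedin T U"
  shows "openin T (two_sided_stabilizer G U)"
proof -
  let ?P = "prod_topology (prod_topology T T) T"
  have fst: "continuous_map ?P T (\<lambda>z. fst (fst z))" and snd: "continuous_map ?P T (\<lambda>z. snd (fst z))"
    using continuous_map_fst_of[OF continuous_map_fst] continuous_map_snd_of[OF continuous_map_fst]
    by (simp_all add: o_def)
  have "closedin ?P {z \<in> topspace ?P.
      (fst (fst z) \<otimes>\<^bsub>G\<^esub> snd z \<otimes>\<^bsub>G\<^esub> snd (fst z) \<in> U) \<noteq> (fst (fst z) \<otimes>\<^bsub>G\<^esub> snd (fst z) \<in> U)}"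
    by (intro closedin_clopen_membership_differs[where X=T] continuous_map_group_mult[OF assms(1)] fst snd
        continuous_map_snd assms(3,4))
  then have "openin T {h \<in> topspace T. \<forall>p\<in>topspace (prod_topology T T).
      fst p \<otimes>\<^bsub>G\<^esub> h \<otimes>\<^bsub>G\<^esub> snd p \<in> U \<longleftrightarrow> fst p \<otimes>\<^bsub>G\<^esub> snd p \<in> U}"
    by (intro openin_Ball_compact_space) (simp_all add: assms(2) compact_space_prod_topology)
  then show ?thesis
    using assms(1) by (simp add: two_sided_stabilizer_def topspace_topological_group)
qed

lemma open_normal_subgroup_in_nbhd_one:
  assumes "profinite_group G T" "openin T W" "\<one>\<^bsub>G\<^esub> \<in> W"
  obtains N where "N \<lhd> G" "openin T N" "N \<subseteq> W"
proof -
  have tg: "topological_group G T" and cs: "compact_space T"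
    and hs: "Hausdorff_space T" and td: "totally_disconnected_space T"
    using assms(1) unfolding profinite_group_def by auto
  obtain U where "openin T U" "closedin T U" "\<one>\<^bsub>G\<^esub> \<in> U" "U \<subseteq> W"
    using clopen_nbhd_in_totally_disconnected_space[OF compact_imp_locally_compact_space[OF cs] hs td
        assms(2,3)] by blast
  moreover have "two_sided_stabilizer G U \<subseteq> U"
    using \<open>\<one>\<^bsub>G\<^esub> \<in> U\<close> group.two_sided_stabilizer_subset[OF group_of_topological_group[OF tg]]
    by blast
  ultimately show ?thesis
    using that[OF group.two_sided_stabilizer_normal[OF group_of_topological_group[OF tg]]
        openin_two_sided_stabilizer[OF tg cs]] by blast
qed

lemma (in group) finite_rcosets_open_subgroup:
  assumes "topological_group G T" "compact_space T" "subgroup H G" "openin T H"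
  shows "finite (rcosets H)"
proof -
  have ts: "topspace T = carrier G"
    using assms(1) by (rule topspace_topological_group)
  have "openin T (H #> x)" if "x \<in> carrier G" for x
  proof -
    have eq: "H #> x = {y \<in> topspace T. y \<otimes> inv x \<in> H}"
      using subgroup.rcos_module[OF assms(3) is_group that]
        r_coset_subset_G[OF subgroup.subset[OF assms(3)] that] ts by auto
    have "continuous_map T T (\<lambda>y. y \<otimes> inv x)"
      using that by (intro continuous_map_group_mult[OF assms(1)] continuous_map_group_const[OF assms(1)])
        simp_all
    then have "openin T {y \<in> topspace T. y \<otimes> inv x \<in> H}"
      by (rule openin_continuous_map_preimage[OF _ assms(4)])
    with eq show ?thesis
      by simp
  qed
  then have opens: "\<forall>C\<in>rcosets H. openin T C"
    unfolding RCOSETS_def by blast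
  have cover: "topspace T \<subseteq> \<Union>(rcosets H)"
  proof
    fix y assume "y \<in> topspace T"
    then have "y \<in> H #> y" "H #> y \<in> rcosets H"
      using ts rcos_self[OF _ assms(3)] rcosetsI[OF subgroup.subset[OF assms(3)]] by auto
    then show "y \<in> \<Union>(rcosets H)"
      by blast
  qed
  obtain \<F> where "finite \<F>" "\<F> \<subseteq> rcosets H" "topspace T \<subseteq> \<Union>\<F>"
    using compact_space_alt[THEN iffD1, OF assms(2), rule_format, OF conjI[OF opens cover]] by auto
  have "C \<in> \<F>" if C: "C \<in> rcosets H" for C
  proof -
    obtain y where "y \<in> C"
      using subgroup.rcosets_non_empty[OF assms(3) C] by blast
    moreover have "C \<subseteq> topspace T"
      using subgroup.rcosets_carrier[OF assms(3) is_group C] ts by simp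
    ultimately obtain D where "D \<in> \<F>" "y \<in> D"
      using \<open>topspace T \<subseteq> \<Union>\<F>\<close> by blast
    with \<open>y \<in> C\<close> have "\<not> disjnt C D"
      by (auto simp: disjnt_def)
    then have "C = D"
      using rcos_disjoint[OF assms(3)] C \<open>D \<in> \<F>\<close> \<open>\<F> \<subseteq> rcosets H\<close>
      unfolding pairwise_def by blast
    with \<open>D \<in> \<F>\<close> show ?thesis
      by simp
  qed
  then have "rcosets H \<subseteq> \<F>"
    by blast
  then show ?thesis
    using \<open>finite \<F>\<close> by (rule finite_subset)
qed

lemma engel_comm_fibre_with_interior:
  assumes "topological_group G T" "compact_space T" "Hausdorff_space T" "g \<in> carrier G"
    and "countable E" "engel_sink G g E"
  obtains i e where "i > 0" "T interior_of {x \<in> carrier G. engel_comm G x i g = e} \<noteq> {}"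
proof -
  have ts: "topspace T = carrier G"
    using assms(1) by (rule topspace_topological_group)
  define fibre where "fibre p = {x \<in> carrier G. engel_comm G x (fst p) g = snd p}" for p
  define P where "P = {i :: nat. 0 < i} \<times> E"
  have "countable (fibre ` P)"
    unfolding P_def using assms(5) by simp
  moreover have "closedin T S" if "S \<in> fibre ` P" for S
  proof -
    obtain p where "p \<in> P" "S = fibre p"
      using \<open>S \<in> fibre ` P\<close> by blast
    then have "snd p \<in> topspace T"
      using assms(6) ts unfolding P_def engel_sink_def by auto
    then have "closedin T {x \<in> topspace T. engel_comm G x (fst p) g \<in> {snd p}}"
      by (intro closedin_continuous_map_preimage[OF continuous_map_engel_comm[OF assms(1,4)]]
          closedin_Hausdorff_singleton[OF assms(3)])
    with \<open>S = fibre p\<close> show ?thesis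
      by (simp add: fibre_def ts)
  qed
  moreover have "\<Union>(fibre ` P) = topspace T"
  proof
    show "\<Union>(fibre ` P) \<subseteq> topspace T"
      by (auto simp: fibre_def ts)
    show "topspace T \<subseteq> \<Union>(fibre ` P)"
    proof
      fix x assume "x \<in> topspace T"
      then obtain n where "n > 0" "\<forall>m\<ge>n. engel_comm G x m g \<in> E"
        using assms(6) ts unfolding engel_sink_def by blast
      with \<open>x \<in> topspace T\<close> have "(n, engel_comm G x n g) \<in> P" "x \<in> fibre (n, engel_comm G x n g)"
        by (simp_all add: P_def fibre_def ts)
      then show "x \<in> \<Union>(fibre ` P)"
        by blast
    qed
  qed
  moreover have "topspace T \<noteq> {}"
    using group.is_monoid[OF group_of_topological_group[OF assms(1)]] ts by auto
  ultimately obtain S where "S \<in> fibre ` P" "T interior_of S \<noteq> {}"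
    using Baire_compact_space_countable_closed_cover[OF assms(2,3)] by metis
  then obtain p where "p \<in> P" "T interior_of fibre p \<noteq> {}"
    by blast
  then show ?thesis
    using that[of "fst p" "snd p"] unfolding P_def fibre_def by auto
qed

lemma engel_comm_constant_on_open_coset:
  assumes "profinite_group G T" "g \<in> carrier G" "countable E" "engel_sink G g E"
  obtains i N b e where "i > 0" "N \<lhd> G" "openin T N" "b \<in> carrier G"
    "\<And>n. n \<in> N \<Longrightarrow> engel_comm G (n \<otimes>\<^bsub>G\<^esub> b) i g = e"
proof -
  have tg: "topological_group G T" and cs: "compact_space T" and hs: "Hausdorff_space T"
    using assms(1) unfolding profinite_group_def by auto
  have ts: "topspace T = carrier G"
    using tg by (rule topspace_topological_group)
  obtain i e where "i > 0" and int: "T interior_of {x \<in> carrier G. engel_comm G x i g = e} \<noteq> {}"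
    using engel_comm_fibre_with_interior[OF tg cs hs assms(2-4)] by blast
  define V where "V = T interior_of {x \<in> carrier G. engel_comm G x i g = e}"
  have V_fibre: "engel_comm G x i g = e" if "x \<in> V" for x
    using that interior_of_subset unfolding V_def by fast
  obtain b where "b \<in> V"
    using int unfolding V_def by blast
  then have b: "b \<in> carrier G"
    using interior_of_subset unfolding V_def by fast
  have "openin T {h \<in> topspace T. h \<otimes>\<^bsub>G\<^esub> b \<in> V}"
    using b unfolding V_def
    by (intro openin_continuous_map_preimage[OF continuous_map_group_mult[OF tg]]
        continuous_map_group_const[OF tg]) simp_all
  moreover have "\<one>\<^bsub>G\<^esub> \<in> {h \<in> topspace T. h \<otimes>\<^bsub>G\<^esub> b \<in> V}"
    using \<open>b \<in> V\<close> b ts group_of_topological_group[OF tg] by (simp add: group.is_monoid)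
  ultimately obtain N where N: "N \<lhd> G" "openin T N" "N \<subseteq> {h \<in> topspace T. h \<otimes>\<^bsub>G\<^esub> b \<in> V}"
    by (rule open_normal_subgroup_in_nbhd_one[OF assms(1)])
  then have "engel_comm G (n \<otimes>\<^bsub>G\<^esub> b) i g = e" if "n \<in> N" for n
    using that V_fibre by blast
  then show ?thesis
    by (rule that[OF \<open>i > 0\<close> N(1,2) b])
qed

theorem lemma2p7:
  fixes G :: "('a, 'b) monoid_scheme" and T :: "'a topology" and g :: 'a
  assumes "profinite_group G T"
    and "g \<in> carrier G"
    and "\<exists>E. countable E \<and> engel_sink G g E"
  shows "\<exists>i k N b. i > 0 \<and> k > 0 \<and> N \<lhd> G \<and> openin T N \<and> b \<in> carrier G \<and>
           (\<forall>n\<in>N. gcomm G (engel_comm G (n \<otimes>\<^bsub>G\<^esub> b) i g) (g [^]\<^bsub>G\<^esub> (k::nat)) = \<one>\<^bsub>G\<^esub>)"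
proof -
  have tg: "topological_group G T" and cs: "compact_space T"
    using assms(1) unfolding profinite_group_def by auto
  have grp: "group G"
    using tg by (rule group_of_topological_group)
  obtain E where "countable E" "engel_sink G g E"
    using assms(3) by blast
  then obtain i N b e where "i > 0" "N \<lhd> G" "openin T N" "b \<in> carrier G"
    and const: "\<And>n. n \<in> N \<Longrightarrow> engel_comm G (n \<otimes>\<^bsub>G\<^esub> b) i g = e"
    using engel_comm_constant_on_open_coset[OF assms(1,2)] by blast
  have "subgroup N G"
    using \<open>N \<lhd> G\<close> by (rule normal_imp_subgroup)
  moreover have "finite (rcosets\<^bsub>G\<^esub> N)"
    by (rule group.finite_rcosets_open_subgroup[OF grp tg cs \<open>subgroup N G\<close> \<open>openin T N\<close>])
  ultimately obtain k :: nat where "k > 0" "g [^]\<^bsub>G\<^esub> k \<in> N"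
    by (rule group.nat_pow_in_subgroup_of_finite_index[OF grp _ _ assms(2)])
  have "g [^]\<^bsub>G\<^esub> k \<otimes>\<^bsub>G\<^esub> g = g \<otimes>\<^bsub>G\<^esub> g [^]\<^bsub>G\<^esub> k"
    using monoid.nat_pow_comm[OF group.is_monoid[OF grp] assms(2), of k 1] assms(2) grp
    by (simp add: group.is_monoid)
  then have "\<forall>n\<in>N. gcomm G (engel_comm G (n \<otimes>\<^bsub>G\<^esub> b) i g) (g [^]\<^bsub>G\<^esub> k) = \<one>\<^bsub>G\<^esub>"
    using group.gcomm_eq_one_if_engel_comm_constant_on_coset[OF grp \<open>N \<lhd> G\<close> \<open>b \<in> carrier G\<close>
        assms(2) \<open>g [^]\<^bsub>G\<^esub> k \<in> N\<close> _ const] by blast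
  with \<open>i > 0\<close> \<open>k > 0\<close> \<open>N \<lhd> G\<close> \<open>openin T N\<close> \<open>b \<in> carrier G\<close> show ?thesis
    by blast
qed

end
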